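(* Let $\mathcal{H}_Q$ and $\mathcal{H}_A$ be finite-dimensional Hilbert spaces with $\dim\mathcal{H}_Q = D_Q \le D_A = \dim\mathcal{H}_A$, and let $U_1,\ldots,U_K$ be unitary operators on $\mathcal{H}_Q$ that mutually commute. Then for every unit vector $|\psi_{QA}\rangle \in \mathcal{H}_Q\otimes\mathcal{H}_A$ (possibly entangled) there exist unit vectors $|\xi\rangle\in\mathcal{H}_Q$, $|\chi\rangle\in\mathcal{H}_A$ and a unitary operator $V$ on $\mathcal{H}_Q\otimes\mathcal{H}_A$, independent of $j$, such that for every $j=1,\ldots,K$, $$V\,(U_j\otimes \mathbb{1}_A)\,(|\xi\rangle\otimes|\chi\rangle) = (U_j\otimes\mathbb{1}_A)\,|\psi_{QA}\rangle ,$$ where $\mathbb{1}_A$ is the identity on $\mathcal{H}_A$. *)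

theory Defs
  imports Complex_Main
begin

text \<open>Finite-dimensional complex Hilbert spaces are modelled as coordinate spaces
  \<open>'i \<Rightarrow> complex\<close> over a finite index type \<open>'i\<close> (standard inner product), and
  operators as square matrices \<open>'i \<Rightarrow> 'i \<Rightarrow> complex\<close>.  The tensor product of
  \<open>'q \<Rightarrow> complex\<close> and \<open>'a \<Rightarrow> complex\<close> is \<open>'q \<times> 'a \<Rightarrow> complex\<close>.\<close>

type_synonym 'i cmat = "'i \<Rightarrow> 'i \<Rightarrow> complex"

definition mat_vec :: "'i::finite cmat \<Rightarrow> ('i \<Rightarrow> complex) \<Rightarrow> ('i \<Rightarrow> complex)" where
  "mat_vec M v = (\<lambda>i. \<Sum>j\<in>UNIV. M i j * v j)"

definition mat_mult :: "'i::finite cmat \<Rightarrow> 'i cmat \<Rightarrow> 'i cmat" where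
  "mat_mult M N = (\<lambda>i k. \<Sum>j\<in>UNIV. M i j * N j k)"

definition id_mat :: "'i cmat" where
  "id_mat = (\<lambda>i j. if i = j then 1 else 0)"

definition adjoint :: "'i cmat \<Rightarrow> 'i cmat" where
  "adjoint M = (\<lambda>i j. cnj (M j i))"

definition unitary_mat :: "'i::finite cmat \<Rightarrow> bool" where
  "unitary_mat M \<longleftrightarrow> mat_mult (adjoint M) M = id_mat \<and> mat_mult M (adjoint M) = id_mat"

definition unit_vector :: "('i::finite \<Rightarrow> complex) \<Rightarrow> bool" where
  "unit_vector v \<longleftrightarrow> (\<Sum>i\<in>UNIV. (cmod (v i))\<^sup>2) = 1"

definition tensor_mat :: "'q cmat \<Rightarrow> 'a cmat \<Rightarrow> ('q \<times> 'a) cmat" where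
  "tensor_mat M N = (\<lambda>(i, a) (j, b). M i j * N a b)"

definition tensor_vec :: "('q \<Rightarrow> complex) \<Rightarrow> ('a \<Rightarrow> complex) \<Rightarrow> ('q \<times> 'a \<Rightarrow> complex)" where
  "tensor_vec x y = (\<lambda>(i, a). x i * y a)"

end

theory Submission
  imports Defs "HOL-Analysis.Cartesian_Space" "HOL-Computational_Algebra.Fundamental_Theorem_Algebra"
begin

(* Mutually commuting unitaries have a common orthonormal eigenbasis e\<^sub>1, ..., e\<^sub>m of H\<^sub>Q, so
   \<psi> = \<Sum>\<^sub>k e\<^sub>k \<otimes> a\<^sub>k and U\<^sub>j \<otimes> 1 multiplies the k-th summand by the eigenvalue \<mu>\<^sub>j\<^sub>k.
   Fix a unit vector \<chi> and scalars t\<^sub>k with |t\<^sub>k| = \<parallel>a\<^sub>k\<parallel> whose phases make \<langle>t\<^sub>k \<chi>, a\<^sub>k\<rangle> real,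
   and put \<xi> = \<Sum>\<^sub>k t\<^sub>k e\<^sub>k.  Then x\<^sub>k = e\<^sub>k \<otimes> t\<^sub>k \<chi> and y\<^sub>k = e\<^sub>k \<otimes> a\<^sub>k have equal norms and real
   overlap, and vectors with different indices k are orthogonal, so the product of the commuting
   reflections in the hyperplanes orthogonal to x\<^sub>k - y\<^sub>k is a unitary V with V x\<^sub>k = y\<^sub>k for all k.
   Hence V (U\<^sub>j \<otimes> 1)(\<xi> \<otimes> \<chi>) = \<Sum>\<^sub>k \<mu>\<^sub>j\<^sub>k y\<^sub>k = (U\<^sub>j \<otimes> 1) \<psi> for every j. *)

lemma sum_UNIV_prod:
  "(\<Sum>z\<in>(UNIV::('a::finite \<times> 'b::finite) set). f z) = (\<Sum>i\<in>UNIV. \<Sum>a\<in>UNIV. f (i, a))"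
  by (simp add: sum.cartesian_product)

definition cinner :: "('i::finite \<Rightarrow> complex) \<Rightarrow> ('i \<Rightarrow> complex) \<Rightarrow> complex" where
  "cinner x y = (\<Sum>i\<in>UNIV. cnj (x i) * y i)"

lemma cinner_sum_right: "cinner u (\<lambda>i. \<Sum>k\<in>S. f k i) = (\<Sum>k\<in>S. cinner u (f k))"
  unfolding cinner_def sum_distrib_left by (rule sum.swap)

lemma cinner_sum_left: "cinner (\<lambda>i. \<Sum>k\<in>S. f k i) u = (\<Sum>k\<in>S. cinner (f k) u)"
  unfolding cinner_def cnj_sum sum_distrib_right by (rule sum.swap)

lemma cinner_scale_right: "cinner u (\<lambda>i. c * v i) = c * cinner u v"
  unfolding cinner_def by (simp add: sum_distrib_left algebra_simps)

lemma cinner_scale_left: "cinner (\<lambda>i. c * v i) u = cnj c * cinner v u"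
  unfolding cinner_def by (simp add: sum_distrib_left algebra_simps)

lemma cinner_add_right: "cinner u (\<lambda>i. v i + w i) = cinner u v + cinner u w"
  unfolding cinner_def by (simp add: sum.distrib algebra_simps)

lemma cinner_diff_right: "cinner u (\<lambda>i. v i - w i) = cinner u v - cinner u w"
  unfolding cinner_def by (simp add: sum_subtractf algebra_simps)

lemma cinner_diff_left: "cinner (\<lambda>i. v i - w i) u = cinner v u - cinner w u"
  unfolding cinner_def by (simp add: sum_subtractf algebra_simps)

lemma cinner_zero_right: "cinner u (\<lambda>_. 0) = 0"
  unfolding cinner_def by simp

lemma cinner_cnj: "cnj (cinner x y) = cinner y x"
  unfolding cinner_def by (simp add: mult.commute)

lemma cinner_self: "cinner v v = of_real (\<Sum>i\<in>UNIV. (cmod (v i))\<^sup>2)"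
  unfolding cinner_def of_real_sum by (intro sum.cong refl) (metis complex_norm_square mult.commute)

lemma cinner_self_eq_0: "cinner v v = 0 \<longleftrightarrow> v = (\<lambda>_. 0)"
proof -
  have "cinner v v = 0 \<longleftrightarrow> (\<Sum>i\<in>UNIV. (cmod (v i))\<^sup>2) = 0"
    unfolding cinner_self of_real_eq_0_iff ..
  also have "\<dots> \<longleftrightarrow> (\<forall>i. (cmod (v i))\<^sup>2 = 0)"
    by (subst sum_nonneg_eq_0_iff) auto
  also have "\<dots> \<longleftrightarrow> v = (\<lambda>_. 0)" by (auto simp: fun_eq_iff)
  finally show ?thesis .
qed

lemma unit_vector_cinner: "unit_vector v \<longleftrightarrow> cinner v v = 1"
  unfolding unit_vector_def cinner_self by (metis of_real_1 of_real_eq_iff)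

lemma exists_normalizing_scalar:
  assumes "u \<noteq> (\<lambda>_. 0)"
  shows "\<exists>c. cinner (\<lambda>q. c * u q) (\<lambda>q. c * u q) = 1"
proof -
  define s where "s = (\<Sum>i\<in>UNIV. (cmod (u i))\<^sup>2)"
  have "cinner u u = of_real s" unfolding s_def by (rule cinner_self)
  then have "s \<noteq> 0" using assms cinner_self_eq_0[of u] by auto
  moreover have "s \<ge> 0" unfolding s_def by (simp add: sum_nonneg)
  ultimately have "cinner (\<lambda>q. of_real (1 / sqrt s) * u q) (\<lambda>q. of_real (1 / sqrt s) * u q) = 1"
    unfolding cinner_scale_left cinner_scale_right cinner_self s_def[symmetric]
    by (simp add: of_real_mult[symmetric] del: of_real_mult)
  then show ?thesis ..
qed

lemma mat_vec_sum: "mat_vec M (\<lambda>i. \<Sum>k\<in>S. f k i) = (\<lambda>i. \<Sum>k\<in>S. mat_vec M (f k) i)"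
  unfolding mat_vec_def sum_distrib_left by (rule ext, rule sum.swap)

lemma mat_vec_scale: "mat_vec M (\<lambda>i. c * v i) = (\<lambda>i. c * mat_vec M v i)"
  unfolding mat_vec_def by (simp add: sum_distrib_left algebra_simps)

lemma mat_vec_add: "mat_vec M (\<lambda>i. v i + w i) = (\<lambda>i. mat_vec M v i + mat_vec M w i)"
  unfolding mat_vec_def by (simp add: sum.distrib algebra_simps)

lemma mat_vec_zero: "mat_vec M (\<lambda>_. 0) = (\<lambda>_. 0)"
  unfolding mat_vec_def by simp

lemma mat_vec_mat_mult: "mat_vec (mat_mult A B) x = mat_vec A (mat_vec B x)"
  unfolding mat_vec_def mat_mult_def sum_distrib_left sum_distrib_right
  by (rule ext, subst sum.swap) (simp add: algebra_simps)

lemma mat_vec_id: "mat_vec id_mat x = x"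
  unfolding mat_vec_def id_mat_def
  by (simp add: fun_eq_iff if_distrib[where f="\<lambda>c. c * _"] cong: if_cong)

lemma mat_vec_id_column: "mat_vec M (\<lambda>J. id_mat J K) = (\<lambda>J. M J K)"
  unfolding mat_vec_def id_mat_def
  by (simp add: fun_eq_iff if_distrib[where f="\<lambda>c. _ * c"] cong: if_cong)

lemma mat_mult_columns: "mat_mult A B = (\<lambda>I K. mat_vec A (\<lambda>J. B J K) I)"
  unfolding mat_mult_def mat_vec_def by simp

lemma adjoint_adjoint: "Defs.adjoint (Defs.adjoint M) = M"
  unfolding Defs.adjoint_def by simp

lemma cinner_adjoint: "cinner (mat_vec (Defs.adjoint M) u) v = cinner u (mat_vec M v)"
  unfolding cinner_def mat_vec_def Defs.adjoint_def cnj_sum sum_distrib_left sum_distrib_right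
  by (subst sum.swap) (simp add: algebra_simps)

lemma cinner_tensor:
  "cinner (tensor_vec f g) (tensor_vec f' g') = cinner f f' * cinner g g'"
  unfolding cinner_def tensor_vec_def sum_UNIV_prod
  by (simp add: sum_product algebra_simps)

lemma mat_vec_tensor:
  "mat_vec (tensor_mat A B) (tensor_vec f g) = tensor_vec (mat_vec A f) (mat_vec B g)"
  unfolding mat_vec_def tensor_mat_def tensor_vec_def sum_UNIV_prod
  by (auto simp: fun_eq_iff sum_product ac_simps)

lemma linear_dependence_if_card_less:
  fixes x :: "nat \<Rightarrow> 'q::finite \<Rightarrow> complex"
  assumes m: "CARD('q) < m"
  shows "\<exists>c. (\<exists>i<m. c i \<noteq> 0) \<and> (\<lambda>q. \<Sum>i<m. c i * x i q) = (\<lambda>_. 0)"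
  \<comment> \<open>Transport to \<open>complex^'q\<close>, where HOL-Analysis provides the dimension theory.\<close>
proof (cases "inj_on (\<lambda>i. vec_lambda (x i) :: complex^'q) {..<m}")
  case True
  let ?y = "\<lambda>i. vec_lambda (x i) :: complex^'q"
  let ?S = "?y ` {..<m}"
  have "vec.dim ?S \<le> CARD('q)"
    using vec.dim_subset[of ?S UNIV] vec_dim_card[where 'n='q and 'a=complex] by simp
  then have "vec.dependent ?S"
    using m card_image[OF True] by (intro vec.dependent_biggerset_general) simp
  then obtain u where u: "\<exists>v\<in>?S. u v \<noteq> 0" "(\<Sum>v\<in>?S. u v *s v) = 0"
    using vec.dependent_finite[of ?S] by blast
  define c where "c i = u (?y i)" for i
  have "(\<Sum>i<m. c i *s ?y i) = 0"
    using u(2) unfolding sum.reindex[OF True] c_def by (simp add: o_def)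
  then have "(\<Sum>i<m. c i *s ?y i) $ q = 0" for q by simp
  then have "(\<Sum>i<m. c i * x i q) = 0" for q by (simp add: sum_component)
  moreover have "\<exists>i<m. c i \<noteq> 0" using u(1) c_def by auto
  ultimately show ?thesis by (intro exI[of _ c]) auto
next
  case False
  then obtain i j where ij: "i < m" "j < m" "i \<noteq> j"
    "vec_lambda (x i) = (vec_lambda (x j) :: complex^'q)"
    unfolding inj_on_def by auto
  then have "x i = x j" by (metis vec_lambda_inverse UNIV_I)
  define c where "c k = (if k = i then 1 else if k = j then -1 else (0::complex))" for k
  have "(\<Sum>k<m. c k * x k q)
      = (\<Sum>k<m. (if k = i then x i q else 0) - (if k = j then x j q else 0))" for q
    by (intro sum.cong refl) (auto simp: c_def ij(3)[symmetric])
  then have "(\<Sum>k<m. c k * x k q) = 0" for q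
    using ij \<open>x i = x j\<close> by (simp add: sum_subtractf)
  moreover have "c i \<noteq> 0" by (simp add: c_def)
  ultimately show ?thesis using ij by (intro exI[of _ c]) auto
qed

definition orthonormal :: "nat \<Rightarrow> (nat \<Rightarrow> 'q::finite \<Rightarrow> complex) \<Rightarrow> bool" where
  "orthonormal m e \<longleftrightarrow> (\<forall>k<m. \<forall>l<m. cinner (e k) (e l) = (if k = l then 1 else 0))"

definition orthonormal_basis :: "nat \<Rightarrow> (nat \<Rightarrow> 'q::finite \<Rightarrow> complex) \<Rightarrow> bool" where
  "orthonormal_basis m e \<longleftrightarrow> orthonormal m e \<and> (\<forall>x. (\<forall>k<m. cinner (e k) x = 0) \<longrightarrow> x = (\<lambda>_. 0))"

lemma cinner_orthonormal_comb:
  assumes "orthonormal m e" "l < m"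
  shows "cinner (e l) (\<lambda>q. \<Sum>i<m. c i * e i q) = c l"
proof -
  have "cinner (e l) (\<lambda>q. \<Sum>i<m. c i * e i q) = (\<Sum>i<m. c i * cinner (e l) (e i))"
    by (simp add: cinner_sum_right cinner_scale_right)
  also have "\<dots> = (\<Sum>i<m. if i = l then c i else 0)"
    using assms unfolding orthonormal_def by (intro sum.cong refl) auto
  also have "\<dots> = c l" using assms(2) by simp
  finally show ?thesis .
qed

lemma orthonormal_le_card:
  fixes e :: "nat \<Rightarrow> 'q::finite \<Rightarrow> complex"
  assumes "orthonormal m e"
  shows "m \<le> CARD('q)"
proof (rule ccontr)
  assume "\<not> m \<le> CARD('q)"
  then obtain c where c: "\<exists>i<m. c i \<noteq> 0" "(\<lambda>q. \<Sum>i<m. c i * e i q) = (\<lambda>_. 0)"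
    using linear_dependence_if_card_less[of m e] by auto
  have "c l = 0" if "l < m" for l
    using cinner_orthonormal_comb[OF assms that, of c] unfolding c(2) cinner_zero_right by simp
  with c(1) show False by auto
qed

lemma orthonormal_extend:
  assumes "orthonormal m e" "cinner v v = 1" "\<And>k. k < m \<Longrightarrow> cinner (e k) v = 0"
  shows "orthonormal (Suc m) (e(m := v))"
proof -
  have "cinner v (e k) = 0" if "k < m" for k
    using assms(3)[OF that] cinner_cnj[of "e k" v] by simp
  then show ?thesis using assms unfolding orthonormal_def by (auto simp: less_Suc_eq)
qed

lemma orthonormal_basis_expansion:
  assumes "orthonormal_basis m e"
  shows "x = (\<lambda>q. \<Sum>k<m. cinner (e k) x * e k q)"
proof -
  define r where "r = (\<lambda>q. x q - (\<Sum>k<m. cinner (e k) x * e k q))"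
  have on: "orthonormal m e" using assms unfolding orthonormal_basis_def ..
  have "cinner (e l) r = 0" if "l < m" for l
    unfolding r_def cinner_diff_right cinner_orthonormal_comb[OF on that] by simp
  then have "r = (\<lambda>_. 0)" using assms unfolding orthonormal_basis_def by blast
  then show ?thesis unfolding r_def by (auto simp: fun_eq_iff dest: fun_cong)
qed

lemma orthonormal_basis_tensor_expansion:
  fixes \<psi> :: "'q::finite \<times> 'a::finite \<Rightarrow> complex"
  assumes "orthonormal_basis m e"
  shows "\<psi> = (\<lambda>z. \<Sum>k<m. tensor_vec (e k) (\<lambda>b. cinner (e k) (\<lambda>q. \<psi> (q, b))) z)"
proof -
  have pointwise: "\<psi> (q, b) = (\<Sum>k<m. tensor_vec (e k) (\<lambda>b. cinner (e k) (\<lambda>q. \<psi> (q, b))) (q, b))"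
    for q b
  proof -
    have "\<psi> (q, b) = (\<Sum>k<m. cinner (e k) (\<lambda>q. \<psi> (q, b)) * e k q)"
      using fun_cong[OF orthonormal_basis_expansion[OF assms, of "\<lambda>q. \<psi> (q, b)"], of q] by simp
    also have "\<dots> = (\<Sum>k<m. tensor_vec (e k) (\<lambda>b. cinner (e k) (\<lambda>q. \<psi> (q, b))) (q, b))"
      by (simp add: tensor_vec_def mult.commute)
    finally show ?thesis .
  qed
  show ?thesis
  proof (intro ext)
    fix z :: "'q \<times> 'a"
    show "\<psi> z = (\<Sum>k<m. tensor_vec (e k) (\<lambda>b. cinner (e k) (\<lambda>q. \<psi> (q, b))) z)"
      using pointwise[of "fst z" "snd z"] by simp
  qed
qed

lemma cinner_tensor_sum_orthonormal:
  assumes "orthonormal m e"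
  shows "cinner (\<lambda>z. \<Sum>k<m. tensor_vec (e k) (f k) z) (\<lambda>z. \<Sum>l<m. tensor_vec (e l) (g l) z)
           = (\<Sum>k<m. cinner (f k) (g k))"
proof -
  have "(\<Sum>l<m. cinner (e k) (e l) * cinner (f k) (g l)) = cinner (f k) (g k)" if "k < m" for k
  proof -
    have "(\<Sum>l<m. cinner (e k) (e l) * cinner (f k) (g l)) = (\<Sum>l<m. if l = k then cinner (f k) (g l) else 0)"
      using assms that unfolding orthonormal_def by (intro sum.cong refl) auto
    then show ?thesis using that by simp
  qed
  then show ?thesis
    unfolding cinner_sum_left cinner_sum_right cinner_tensor by simp
qed

section \<open>Simultaneous diagonalization of commuting unitaries\<close>

definition lin_subspace :: "('q::finite \<Rightarrow> complex) set \<Rightarrow> bool" where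
  "lin_subspace W \<longleftrightarrow> (\<lambda>_. 0) \<in> W \<and> (\<forall>x\<in>W. \<forall>y\<in>W. (\<lambda>i. x i + y i) \<in> W) \<and>
     (\<forall>c. \<forall>x\<in>W. (\<lambda>i. c * x i) \<in> W)"

definition invariant :: "'q::finite cmat \<Rightarrow> ('q \<Rightarrow> complex) set \<Rightarrow> bool" where
  "invariant M W \<longleftrightarrow> (\<forall>x\<in>W. mat_vec M x \<in> W)"

lemma lin_subspace_sum:
  assumes "lin_subspace W" "finite S" "\<And>k. k \<in> S \<Longrightarrow> f k \<in> W"
  shows "(\<lambda>i. \<Sum>k\<in>S. f k i) \<in> W"
  using assms(2,3)
proof (induction S rule: finite_induct)
  case empty
  then show ?case using assms(1) by (simp add: lin_subspace_def)
next
  case (insert a F)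
  then show ?case using assms(1) unfolding lin_subspace_def by simp
qed

lemma lin_subspace_eigenspace:
  assumes "lin_subspace W"
  shows "lin_subspace {x\<in>W. mat_vec A x = (\<lambda>q. \<nu> * x q)}"
  using assms unfolding lin_subspace_def
  by (auto simp: mat_vec_zero mat_vec_add mat_vec_scale algebra_simps)

lemma invariant_eigenspace:
  assumes "mat_mult A B = mat_mult B A" "invariant B W"
  shows "invariant B {x\<in>W. mat_vec A x = (\<lambda>q. \<nu> * x q)}"
  unfolding invariant_def
proof
  fix x assume x: "x \<in> {x\<in>W. mat_vec A x = (\<lambda>q. \<nu> * x q)}"
  have "mat_vec A (mat_vec B x) = mat_vec B (mat_vec A x)"
    using assms(1) by (metis mat_vec_mat_mult)
  also have "\<dots> = (\<lambda>q. \<nu> * mat_vec B x q)" using x by (simp add: mat_vec_scale)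
  finally show "mat_vec B x \<in> {x\<in>W. mat_vec A x = (\<lambda>q. \<nu> * x q)}"
    using x assms(2) unfolding invariant_def by auto
qed

definition poly_apply :: "complex poly \<Rightarrow> 'q::finite cmat \<Rightarrow> ('q \<Rightarrow> complex) \<Rightarrow> ('q \<Rightarrow> complex)" where
  "poly_apply p M w = (\<lambda>q. \<Sum>i\<le>degree p. coeff p i * (mat_vec M ^^ i) w q)"

lemma poly_apply_upto:
  assumes "degree p \<le> N"
  shows "poly_apply p M w = (\<lambda>q. \<Sum>i\<le>N. coeff p i * (mat_vec M ^^ i) w q)"
  unfolding poly_apply_def
  by (rule ext, rule sum.mono_neutral_left) (use assms in \<open>auto simp: coeff_eq_0\<close>)

lemma poly_apply_add: "poly_apply (p + r) M w = (\<lambda>q. poly_apply p M w q + poly_apply r M w q)"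
proof -
  let ?N = "max (degree p) (degree r)"
  have "degree (p + r) \<le> ?N" by (rule degree_add_le) auto
  moreover have "degree p \<le> ?N" "degree r \<le> ?N" by auto
  ultimately show ?thesis
    by (simp add: poly_apply_upto[of _ ?N] sum.distrib distrib_right)
qed

lemma poly_apply_smult: "poly_apply (smult c p) M w = (\<lambda>q. c * poly_apply p M w q)"
  unfolding poly_apply_upto[OF degree_smult_le] poly_apply_def
  by (simp add: sum_distrib_left mult.assoc)

lemma poly_apply_pCons_0: "poly_apply (pCons 0 p) M w = mat_vec M (poly_apply p M w)"
proof -
  have "poly_apply (pCons 0 p) M w
      = (\<lambda>q. \<Sum>i\<le>Suc (degree p). coeff (pCons 0 p) i * (mat_vec M ^^ i) w q)"
    by (rule poly_apply_upto[OF degree_pCons_le])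
  also have "\<dots> = (\<lambda>q. \<Sum>i\<le>degree p. coeff p i * mat_vec M ((mat_vec M ^^ i) w) q)"
    by (simp only: sum.atMost_Suc_shift) simp
  also have "\<dots> = mat_vec M (poly_apply p M w)"
    unfolding poly_apply_def mat_vec_sum mat_vec_scale ..
  finally show ?thesis .
qed

lemma poly_apply_linear_factor:
  "poly_apply ([:-r, 1:] * p) M w = (\<lambda>q. mat_vec M (poly_apply p M w) q - r * poly_apply p M w q)"
proof -
  have "[:-r, 1:] * p = smult (-r) p + pCons 0 p" by (simp add: mult_pCons_left)
  then show ?thesis
    by (simp only: poly_apply_add poly_apply_smult poly_apply_pCons_0) (simp add: algebra_simps)
qed

lemma poly_apply_in_invariant:
  assumes "lin_subspace W" "invariant M W" "w \<in> W"
  shows "poly_apply p M w \<in> W"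
proof -
  have "(mat_vec M ^^ i) w \<in> W" for i
    by (induction i) (use assms in \<open>auto simp: invariant_def\<close>)
  then show ?thesis unfolding poly_apply_def
    using assms(1) by (intro lin_subspace_sum) (auto simp: lin_subspace_def)
qed

text \<open>Splitting off the linear factors of an annihilating polynomial one at a time, the last
  factor that does not yet annihilate \<open>w\<close> produces an eigenvector.\<close>

lemma eigenvector_if_poly_apply_eq_0:
  assumes W: "lin_subspace W" "invariant M W" "w \<in> W" "w \<noteq> (\<lambda>_. 0)"
  shows "p \<noteq> 0 \<Longrightarrow> poly_apply p M w = (\<lambda>_. 0) \<Longrightarrow>
           \<exists>u \<mu>. u \<in> W \<and> u \<noteq> (\<lambda>_. 0) \<and> mat_vec M u = (\<lambda>q. \<mu> * u q)"
proof (induction "degree p" arbitrary: p rule: less_induct)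
  case less
  show ?case
  proof (cases "degree p = 0")
    case True
    then have "poly_apply p M w = (\<lambda>q. coeff p 0 * w q)" unfolding poly_apply_def by simp
    moreover have "coeff p 0 \<noteq> 0" using True less.prems(1) by (metis leading_coeff_0_iff)
    ultimately have "w = (\<lambda>_. 0)" using less.prems(2) by (auto simp: fun_eq_iff)
    with W(4) show ?thesis by simp
  next
    case False
    then have "\<not> constant (poly p)" by (simp add: constant_degree)
    then obtain r where "poly p r = 0" using fundamental_theorem_of_algebra by blast
    then obtain p' where p': "p = [:-r, 1:] * p'" by (metis poly_eq_0_iff_dvd dvdE)
    have "p' \<noteq> 0" using p' less.prems(1) by auto
    then have deg: "degree p = Suc (degree p')" unfolding p' by (subst degree_mult_eq) auto
    show ?thesis
    proof (cases "poly_apply p' M w = (\<lambda>_. 0)")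
      case True
      then show ?thesis using less.hyps[of p'] deg \<open>p' \<noteq> 0\<close> by simp
    next
      case False
      have "mat_vec M (poly_apply p' M w) = (\<lambda>q. r * poly_apply p' M w q)"
        using less.prems(2) unfolding p' poly_apply_linear_factor
        by (auto simp: fun_eq_iff dest: fun_cong)
      then show ?thesis using False poly_apply_in_invariant[OF W(1,2,3)] by blast
    qed
  qed
qed

lemma eigenvector_in_invariant_subspace:
  fixes M :: "'q::finite cmat"
  assumes W: "lin_subspace W" "invariant M W" "w \<in> W" "w \<noteq> (\<lambda>_. 0)"
  shows "\<exists>u \<mu>. u \<in> W \<and> u \<noteq> (\<lambda>_. 0) \<and> mat_vec M u = (\<lambda>q. \<mu> * u q)"
proof -
  let ?m = "Suc CARD('q)"
  obtain c where c: "\<exists>i<?m. c i \<noteq> 0" "(\<lambda>q. \<Sum>i<?m. c i * (mat_vec M ^^ i) w q) = (\<lambda>_. 0)"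
    using linear_dependence_if_card_less[of ?m "\<lambda>i. (mat_vec M ^^ i) w"] by auto
  define p where "p = (\<Sum>i<?m. monom (c i) i)"
  have coeff_p: "coeff p k = (if k < ?m then c k else 0)" for k
    unfolding p_def coeff_sum coeff_monom by (simp add: sum.delta)
  have deg: "degree p \<le> CARD('q)" by (rule degree_le) (simp add: coeff_p)
  have "p \<noteq> 0" using c(1) coeff_p by (metis coeff_0)
  moreover have "poly_apply p M w = (\<lambda>_. 0)"
    unfolding poly_apply_upto[OF deg] using c(2) by (simp add: coeff_p lessThan_Suc_atMost[symmetric])
  ultimately show ?thesis using eigenvector_if_poly_apply_eq_0[OF W] by blast
qed

lemma common_eigenvector_in_invariant_subspace:
  fixes U :: "'j \<Rightarrow> 'q::finite cmat"
  assumes "finite I"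
    and comm: "\<And>i j. i \<in> I \<Longrightarrow> j \<in> I \<Longrightarrow> mat_mult (U i) (U j) = mat_mult (U j) (U i)"
    and W: "lin_subspace W" "\<And>i. i \<in> I \<Longrightarrow> invariant (U i) W" "w \<in> W" "w \<noteq> (\<lambda>_. 0)"
  shows "\<exists>u \<mu>. u \<in> W \<and> u \<noteq> (\<lambda>_. 0) \<and> (\<forall>i\<in>I. mat_vec (U i) u = (\<lambda>q. \<mu> i * u q))"
proof -
  \<comment> \<open>Cut \<open>W\<close> down to an eigenspace of one \<open>U j\<close> at a time; by commutativity the result stays
    invariant under all \<open>U i\<close>.\<close>
  have "\<exists>W' \<mu>. W' \<subseteq> W \<and> lin_subspace W' \<and> (\<forall>i\<in>I. invariant (U i) W') \<and> (\<exists>w'\<in>W'. w' \<noteq> (\<lambda>_. 0)) \<and>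
          (\<forall>i\<in>F. \<forall>x\<in>W'. mat_vec (U i) x = (\<lambda>q. \<mu> i * x q))" if "F \<subseteq> I" for F
    using finite_subset[OF that \<open>finite I\<close>] that
  proof (induction F rule: finite_induct)
    case empty
    show ?case using W by (intro exI[of _ W]) auto
  next
    case (insert j F)
    then obtain W' \<mu> where W': "W' \<subseteq> W" "lin_subspace W'" "\<forall>i\<in>I. invariant (U i) W'"
      "\<exists>w'\<in>W'. w' \<noteq> (\<lambda>_. 0)" "\<forall>i\<in>F. \<forall>x\<in>W'. mat_vec (U i) x = (\<lambda>q. \<mu> i * x q)"
      by auto
    have j: "j \<in> I" using insert.prems by simp
    obtain u \<nu> where u: "u \<in> W'" "u \<noteq> (\<lambda>_. 0)" "mat_vec (U j) u = (\<lambda>q. \<nu> * u q)"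
      using eigenvector_in_invariant_subspace[OF W'(2)] W'(3,4) j by blast
    define W'' where "W'' = {x\<in>W'. mat_vec (U j) x = (\<lambda>q. \<nu> * x q)}"
    have "lin_subspace W''" unfolding W''_def by (rule lin_subspace_eigenspace[OF W'(2)])
    moreover have "\<forall>i\<in>I. invariant (U i) W''"
      using W'(3) comm[OF j] unfolding W''_def by (simp add: invariant_eigenspace)
    moreover have "\<forall>i\<in>insert j F. \<forall>x\<in>W''. mat_vec (U i) x = (\<lambda>q. (\<mu>(j := \<nu>)) i * x q)"
      using W'(5) insert.hyps(2) unfolding W''_def by auto
    moreover have "W'' \<subseteq> W" "\<exists>w'\<in>W''. w' \<noteq> (\<lambda>_. 0)" using W'(1) u unfolding W''_def by auto
    ultimately show ?case by (intro exI[of _ W''] exI[of _ "\<mu>(j := \<nu>)"]) simp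
  qed
  from this[OF subset_refl] obtain W' \<mu> w' where "W' \<subseteq> W" "w' \<in> W'" "w' \<noteq> (\<lambda>_. 0)"
    "\<forall>i\<in>I. \<forall>x\<in>W'. mat_vec (U i) x = (\<lambda>q. \<mu> i * x q)"
    by blast
  then show ?thesis by (intro exI[of _ w'] exI[of _ \<mu>]) auto
qed

definition common_eigenvectors :: "'j set \<Rightarrow> ('j \<Rightarrow> 'q::finite cmat) \<Rightarrow> nat \<Rightarrow>
    (nat \<Rightarrow> 'q \<Rightarrow> complex) \<Rightarrow> ('j \<Rightarrow> nat \<Rightarrow> complex) \<Rightarrow> bool" where
  "common_eigenvectors I U m e \<mu> \<longleftrightarrow> (\<forall>j\<in>I. \<forall>k<m. mat_vec (U j) (e k) = (\<lambda>q. \<mu> j k * e k q))"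

lemma cinner_eigenvector_unitary:
  assumes U: "unitary_mat U" and ev: "mat_vec U e = (\<lambda>q. l * e q)" and e0: "e \<noteq> (\<lambda>_. 0)"
  shows "cinner e (mat_vec U x) = l * cinner e x"
proof -
  have UU: "mat_vec (Defs.adjoint U) (mat_vec U v) = v" for v
    using U unfolding unitary_mat_def by (simp add: mat_vec_mat_mult[symmetric] mat_vec_id)
  have "cinner e e = cinner (mat_vec U e) (mat_vec U e)"
    using cinner_adjoint[of "Defs.adjoint U" e "mat_vec U e"] by (simp add: adjoint_adjoint UU)
  also have "\<dots> = cnj l * l * cinner e e" unfolding ev cinner_scale_left cinner_scale_right by simp
  finally have "cnj l * l = 1" using e0 cinner_self_eq_0 by (metis mult_cancel_right1)
  moreover have "(\<lambda>q. l * mat_vec (Defs.adjoint U) e q) = e"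
    using UU[of e] unfolding ev mat_vec_scale .
  ultimately have adj: "mat_vec (Defs.adjoint U) e = (\<lambda>q. cnj l * e q)"
    by (metis (no_types, lifting) mult.assoc mult_1)
  have "cinner e (mat_vec U x) = cinner (mat_vec (Defs.adjoint U) e) x" by (rule cinner_adjoint[symmetric])
  also have "\<dots> = l * cinner e x" unfolding adj cinner_scale_left by simp
  finally show ?thesis .
qed

lemma invariant_orthogonal_complement:
  assumes "unitary_mat U" "\<And>k. k < m \<Longrightarrow> mat_vec U (e k) = (\<lambda>q. l k * e k q)"
    "\<And>k. k < m \<Longrightarrow> e k \<noteq> (\<lambda>_. 0)"
  shows "invariant U {x. \<forall>k<m. cinner (e k) x = 0}"
  using cinner_eigenvector_unitary[OF assms(1) assms(2,3)] unfolding invariant_def by auto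

lemma lin_subspace_orthogonal_complement: "lin_subspace {x. \<forall>k<m. cinner (e k) x = 0}"
  unfolding lin_subspace_def by (simp add: cinner_zero_right cinner_add_right cinner_scale_right)

lemma common_eigenvectors_extend:
  fixes U :: "'j \<Rightarrow> 'q::finite cmat"
  assumes "finite I"
    and unit: "\<And>j. j \<in> I \<Longrightarrow> unitary_mat (U j)"
    and comm: "\<And>i j. i \<in> I \<Longrightarrow> j \<in> I \<Longrightarrow> mat_mult (U i) (U j) = mat_mult (U j) (U i)"
    and e: "orthonormal m e" and eig: "common_eigenvectors I U m e \<mu>"
    and x: "x \<noteq> (\<lambda>_. 0)" "\<forall>k<m. cinner (e k) x = 0"
  shows "\<exists>e' \<mu>'. orthonormal (Suc m) e' \<and> common_eigenvectors I U (Suc m) e' \<mu>'"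
proof -
  define W where "W = {x. \<forall>k<m. cinner (e k) x = 0}"
  have "e k \<noteq> (\<lambda>_. 0)" if "k < m" for k
    using e that cinner_zero_right[of "e k"] unfolding orthonormal_def by force
  moreover have "mat_vec (U j) (e k) = (\<lambda>q. \<mu> j k * e k q)" if "j \<in> I" "k < m" for j k
    using eig that unfolding common_eigenvectors_def by blast
  ultimately have inv: "invariant (U j) W" if "j \<in> I" for j
    unfolding W_def using that by (intro invariant_orthogonal_complement[OF unit]) auto
  have "lin_subspace W" "x \<in> W"
    using x(2) lin_subspace_orthogonal_complement unfolding W_def by blast+
  from common_eigenvector_in_invariant_subspace[where I=I and U=U and W=W and w=x,
      OF \<open>finite I\<close> comm this(1) inv this(2) x(1)]
  obtain u \<nu> where u: "u \<in> W" "u \<noteq> (\<lambda>_. 0)" "\<forall>j\<in>I. mat_vec (U j) u = (\<lambda>q. \<nu> j * u q)"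
    by blast
  obtain c where c: "cinner (\<lambda>q. c * u q) (\<lambda>q. c * u q) = 1"
    using exists_normalizing_scalar[OF u(2)] by blast
  have "orthonormal (Suc m) (e(m := (\<lambda>q. c * u q)))"
    using u(1) unfolding W_def by (intro orthonormal_extend[OF e c]) (simp add: cinner_scale_right)
  moreover have "common_eigenvectors I U (Suc m) (e(m := (\<lambda>q. c * u q))) (\<lambda>j. (\<mu> j)(m := \<nu> j))"
    using eig u(3) unfolding common_eigenvectors_def
    by (auto simp: less_Suc_eq mat_vec_scale algebra_simps)
  ultimately show ?thesis by blast
qed

text \<open>An orthonormal family of common eigenvectors of maximal length (bounded by the dimension)
  is complete, as \<open>common_eigenvectors_extend\<close> shows.\<close>

lemma commuting_unitaries_common_eigenbasis:
  fixes U :: "'j \<Rightarrow> 'q::finite cmat"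
  assumes "finite I"
    and unit: "\<And>j. j \<in> I \<Longrightarrow> unitary_mat (U j)"
    and comm: "\<And>i j. i \<in> I \<Longrightarrow> j \<in> I \<Longrightarrow> mat_mult (U i) (U j) = mat_mult (U j) (U i)"
  shows "\<exists>m e \<mu>. orthonormal_basis m e \<and> common_eigenvectors I U m e \<mu>"
proof -
  define S where
    "S = {m. \<exists>e \<mu>. orthonormal m (e :: nat \<Rightarrow> 'q \<Rightarrow> complex) \<and> common_eigenvectors I U m e \<mu>}"
  have "0 \<in> S" unfolding S_def orthonormal_def common_eigenvectors_def by auto
  have "S \<subseteq> {..CARD('q)}" unfolding S_def using orthonormal_le_card by auto
  then have "finite S" by (rule finite_subset) simp
  define m where "m = Max S"
  have "m \<in> S" unfolding m_def using \<open>finite S\<close> \<open>0 \<in> S\<close> by (intro Max_in) auto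
  then obtain e \<mu> where e: "orthonormal m e" and eig: "common_eigenvectors I U m e \<mu>"
    unfolding S_def by auto
  have "x = (\<lambda>_. 0)" if "\<forall>k<m. cinner (e k) x = 0" for x
  proof (rule ccontr)
    assume "x \<noteq> (\<lambda>_. 0)"
    with common_eigenvectors_extend[where I=I and U=U, OF \<open>finite I\<close> unit comm e eig _ that]
    have "Suc m \<in> S" unfolding S_def by blast
    then show False using Max_ge[OF \<open>finite S\<close>] unfolding m_def by fastforce
  qed
  then show ?thesis
    using e eig unfolding orthonormal_basis_def by (intro exI[of _ m] exI[of _ e] exI[of _ \<mu>]) blast
qed

section \<open>Unitaries built from reflections\<close>

text \<open>For mutually orthogonal \<open>w\<^sub>k\<close>, \<open>orth_proj m w\<close> is the orthogonal projection onto their span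
  (a zero \<open>w\<^sub>k\<close> contributes nothing, as \<open>x / 0 = 0\<close>), and \<open>reflection_mat m w = 1 - 2 P\<close> is the
  product of the reflections in the hyperplanes orthogonal to the \<open>w\<^sub>k\<close>.\<close>

definition orth_proj :: "nat \<Rightarrow> (nat \<Rightarrow> 'i::finite \<Rightarrow> complex) \<Rightarrow> ('i \<Rightarrow> complex) \<Rightarrow> ('i \<Rightarrow> complex)" where
  "orth_proj m w v = (\<lambda>I. \<Sum>k<m. cinner (w k) v / cinner (w k) (w k) * w k I)"

definition pairwise_orthogonal :: "nat \<Rightarrow> (nat \<Rightarrow> 'i::finite \<Rightarrow> complex) \<Rightarrow> bool" where
  "pairwise_orthogonal m w \<longleftrightarrow> (\<forall>k<m. \<forall>l<m. k \<noteq> l \<longrightarrow> cinner (w k) (w l) = 0)"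

definition reflection_mat :: "nat \<Rightarrow> (nat \<Rightarrow> 'i::finite \<Rightarrow> complex) \<Rightarrow> 'i cmat" where
  "reflection_mat m w = (\<lambda>I J. id_mat I J - (\<Sum>k<m. 2 * w k I * cnj (w k J) / cinner (w k) (w k)))"

lemma mat_vec_reflection_mat: "mat_vec (reflection_mat m w) v = (\<lambda>I. v I - 2 * orth_proj m w v I)"
proof (rule ext)
  fix I
  have "mat_vec (reflection_mat m w) v I = (\<Sum>J\<in>UNIV. id_mat I J * v J) -
      (\<Sum>J\<in>UNIV. \<Sum>k<m. 2 * w k I * cnj (w k J) * v J / cinner (w k) (w k))"
    unfolding mat_vec_def reflection_mat_def
    by (simp add: left_diff_distrib sum_subtractf sum_distrib_right)
  also have "(\<Sum>J\<in>UNIV. id_mat I J * v J) = v I"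
    using mat_vec_id[of v] unfolding mat_vec_def by metis
  also have "(\<Sum>J\<in>UNIV. \<Sum>k<m. 2 * w k I * cnj (w k J) * v J / cinner (w k) (w k)) = 2 * orth_proj m w v I"
    unfolding orth_proj_def cinner_def
    by (subst sum.swap) (simp add: sum_distrib_left sum_distrib_right sum_divide_distrib ac_simps)
  finally show "mat_vec (reflection_mat m w) v I = v I - 2 * orth_proj m w v I" .
qed

lemma cinner_orth_proj:
  assumes orth: "pairwise_orthogonal m w" and "l < m"
  shows "cinner (w l) (orth_proj m w v) = cinner (w l) v"
proof -
  have "cinner (w l) (orth_proj m w v) = (\<Sum>k<m. cinner (w k) v / cinner (w k) (w k) * cinner (w l) (w k))"
    unfolding orth_proj_def cinner_sum_right cinner_scale_right ..
  also have "\<dots> = (\<Sum>k<m. if k = l then cinner (w l) v / cinner (w l) (w l) * cinner (w l) (w l) else 0)"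
    using orth \<open>l < m\<close> unfolding pairwise_orthogonal_def by (intro sum.cong refl) auto
  also have "\<dots> = cinner (w l) v"
    using \<open>l < m\<close> cinner_self_eq_0[of "w l"] by (auto simp: cinner_def)
  finally show ?thesis .
qed

lemma orth_proj_eqI:
  assumes "\<And>k. k < m \<Longrightarrow> cinner (w k) u = cinner (w k) v"
  shows "orth_proj m w u = orth_proj m w v"
  unfolding orth_proj_def using assms by simp

lemma orth_proj_idem:
  assumes "pairwise_orthogonal m w"
  shows "orth_proj m w (orth_proj m w v) = orth_proj m w v"
  by (rule orth_proj_eqI) (rule cinner_orth_proj[OF assms])

lemma orth_proj_diff_scale:
  "orth_proj m w (\<lambda>I. v I - c * u I) = (\<lambda>I. orth_proj m w v I - c * orth_proj m w u I)"
  unfolding orth_proj_def cinner_diff_right cinner_scale_right sum_distrib_left sum_subtractf[symmetric]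
  by (intro ext sum.cong refl) (simp add: diff_divide_distrib algebra_simps)

lemma reflection_mat_involution:
  assumes "pairwise_orthogonal m w"
  shows "mat_vec (reflection_mat m w) (mat_vec (reflection_mat m w) v) = v"
  using orth_proj_idem[OF assms, where v=v] by (simp add: mat_vec_reflection_mat orth_proj_diff_scale)

lemma adjoint_reflection_mat: "Defs.adjoint (reflection_mat m w) = reflection_mat m w"
proof (intro ext)
  fix I J
  have "cnj (reflection_mat m w J I) = id_mat I J - (\<Sum>k<m. 2 * cnj (w k J) * w k I / cinner (w k) (w k))"
    unfolding reflection_mat_def id_mat_def by (simp add: cnj_sum cinner_cnj)
  also have "\<dots> = reflection_mat m w I J"
    unfolding reflection_mat_def by (intro arg_cong2[where f="(-)"] sum.cong refl) auto
  finally show "Defs.adjoint (reflection_mat m w) I J = reflection_mat m w I J"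
    unfolding Defs.adjoint_def .
qed

lemma unitary_reflection_mat:
  assumes "pairwise_orthogonal m w"
  shows "unitary_mat (reflection_mat m w)"
proof -
  have "mat_vec (reflection_mat m w) (\<lambda>J. reflection_mat m w J K) = (\<lambda>J. id_mat J K)" for K
    using reflection_mat_involution[OF assms, of "\<lambda>J. id_mat J K"] by (simp only: mat_vec_id_column)
  then have "mat_mult (reflection_mat m w) (reflection_mat m w) = id_mat"
    unfolding mat_mult_columns by simp
  then show ?thesis unfolding unitary_mat_def adjoint_reflection_mat by simp
qed

text \<open>If \<open>x\<close> and \<open>y\<close> have equal norms and a real inner product, then \<open>\<langle>w, w\<rangle> = 2 \<langle>w, x\<rangle>\<close>
  for \<open>w = x - y\<close>, so the reflection in the hyperplane orthogonal to \<open>w\<close> swaps \<open>x\<close> and \<open>y\<close>.\<close>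

lemma reflection_mat_swap:
  assumes orth: "pairwise_orthogonal m w"
    and k: "k < m" and wk: "w k = (\<lambda>I. x I - y I)"
    and norm: "cinner x x = cinner y y" and real: "cinner x y = cinner y x"
    and other: "\<And>l. l < m \<Longrightarrow> l \<noteq> k \<Longrightarrow> cinner (w l) x = 0"
  shows "mat_vec (reflection_mat m w) x = y"
proof -
  have "orth_proj m w x = (\<lambda>I. \<Sum>l<m. if l = k then cinner (w k) x / cinner (w k) (w k) * w k I else 0)"
    unfolding orth_proj_def using other by (intro ext sum.cong refl) auto
  also have "\<dots> = (\<lambda>I. cinner (w k) x / cinner (w k) (w k) * w k I)"
    using k by simp
  finally have proj: "orth_proj m w x = (\<lambda>I. cinner (w k) x / cinner (w k) (w k) * w k I)" .
  have ww: "cinner (w k) (w k) = 2 * cinner (w k) x"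
    unfolding wk cinner_diff_left cinner_diff_right using norm real by simp
  have "(\<lambda>I. 2 * orth_proj m w x I) = w k"
  proof (cases "cinner (w k) (w k) = 0")
    case True
    then show ?thesis unfolding proj using cinner_self_eq_0[of "w k"] by simp
  next
    case False
    then show ?thesis unfolding proj ww by auto
  qed
  then show ?thesis unfolding mat_vec_reflection_mat wk by (auto simp: fun_eq_iff dest: fun_cong)
qed

lemma unitary_mapping_orthogonal_pairs:
  fixes m :: nat and x y :: "nat \<Rightarrow> 'i::finite \<Rightarrow> complex"
  assumes norm: "\<And>k. k < m \<Longrightarrow> cinner (x k) (x k) = cinner (y k) (y k)"
    and real: "\<And>k. k < m \<Longrightarrow> cinner (x k) (y k) = cinner (y k) (x k)"
    and orth: "\<And>k l. k < m \<Longrightarrow> l < m \<Longrightarrow> k \<noteq> l \<Longrightarrow>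
                 cinner (x k) (x l) = 0 \<and> cinner (x k) (y l) = 0 \<and> cinner (y k) (y l) = 0"
  shows "\<exists>V. unitary_mat V \<and> (\<forall>k<m. mat_vec V (x k) = y k)"
proof -
  define w where "w k = (\<lambda>I. x k I - y k I)" for k
  have yx: "cinner (y k) (x l) = 0" if "k < m" "l < m" "k \<noteq> l" for k l
    using orth[of l k] that cinner_cnj[of "x l" "y k"] by auto
  have "cinner (w k) (w l) = 0" if "k < m" "l < m" "k \<noteq> l" for k l
    unfolding w_def cinner_diff_left cinner_diff_right using orth[OF that] yx[OF that] by simp
  then have ww: "pairwise_orthogonal m w" unfolding pairwise_orthogonal_def by blast
  have wx: "cinner (w l) (x k) = 0" if "l < m" "k < m" "l \<noteq> k" for l k
    unfolding w_def cinner_diff_left using orth[OF that] yx[OF that] by simp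
  have "mat_vec (reflection_mat m w) (x k) = y k" if "k < m" for k
    using wx that by (intro reflection_mat_swap[OF ww that w_def norm[OF that] real[OF that]]) simp
  then show ?thesis using unitary_reflection_mat[OF ww] by blast
qed

lemma unitary_mapping_tensor_components:
  assumes "orthonormal m e"
    and "\<And>k. k < m \<Longrightarrow> cinner (f k) (f k) = cinner (g k) (g k)"
    and "\<And>k. k < m \<Longrightarrow> cinner (f k) (g k) = cinner (g k) (f k)"
  shows "\<exists>V. unitary_mat V \<and> (\<forall>k<m. mat_vec V (tensor_vec (e k) (f k)) = tensor_vec (e k) (g k))"
proof (rule unitary_mapping_orthogonal_pairs)
  have ee: "cinner (e k) (e l) = (if k = l then 1 else 0)" if "k < m" "l < m" for k l
    using assms(1) that unfolding orthonormal_def by blast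
  show "cinner (tensor_vec (e k) (f k)) (tensor_vec (e k) (f k))
      = cinner (tensor_vec (e k) (g k)) (tensor_vec (e k) (g k))" if "k < m" for k
    using assms(2)[OF that] by (simp add: cinner_tensor ee[OF that that])
  show "cinner (tensor_vec (e k) (f k)) (tensor_vec (e k) (g k))
      = cinner (tensor_vec (e k) (g k)) (tensor_vec (e k) (f k))" if "k < m" for k
    using assms(3)[OF that] by (simp add: cinner_tensor ee[OF that that])
  show "cinner (tensor_vec (e k) (f k)) (tensor_vec (e l) (f l)) = 0 \<and>
      cinner (tensor_vec (e k) (f k)) (tensor_vec (e l) (g l)) = 0 \<and>
      cinner (tensor_vec (e k) (g k)) (tensor_vec (e l) (g l)) = 0" if "k < m" "l < m" "k \<noteq> l" for k l
    using that by (simp add: cinner_tensor ee)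
qed

section \<open>Product states related to entangled states\<close>

no_notation vec_lambda (binder \<open>\<chi>\<close> 10)

lemma tensor_vec_scale_left: "tensor_vec (\<lambda>q. c * f q) g = (\<lambda>z. c * tensor_vec f g z)"
  unfolding tensor_vec_def by (auto simp: fun_eq_iff)

lemma mat_vec_tensor_id_eigen_sum:
  assumes "\<And>k. k < m \<Longrightarrow> mat_vec A (e k) = (\<lambda>q. c k * e k q)"
  shows "mat_vec (tensor_mat A id_mat) (\<lambda>z. \<Sum>k<m. tensor_vec (e k) (f k) z)
           = (\<lambda>z. \<Sum>k<m. c k * tensor_vec (e k) (f k) z)"
  unfolding mat_vec_sum mat_vec_tensor mat_vec_id using assms by (simp add: tensor_vec_scale_left)

lemma mat_vec_tensor_id_intertwines_components:
  assumes "\<And>k. k < m \<Longrightarrow> mat_vec A (e k) = (\<lambda>q. c k * e k q)"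
    and "\<forall>k<m. mat_vec V (tensor_vec (e k) (f k)) = tensor_vec (e k) (g k)"
  shows "mat_vec V (mat_vec (tensor_mat A id_mat) (\<lambda>z. \<Sum>k<m. tensor_vec (e k) (f k) z))
           = mat_vec (tensor_mat A id_mat) (\<lambda>z. \<Sum>k<m. tensor_vec (e k) (g k) z)"
proof -
  note eigen_sum = mat_vec_tensor_id_eigen_sum[where A=A and c=c and e=e and m=m, OF assms(1)]
  have "mat_vec V (mat_vec (tensor_mat A id_mat) (\<lambda>z. \<Sum>k<m. tensor_vec (e k) (f k) z))
      = mat_vec V (\<lambda>z. \<Sum>k<m. c k * tensor_vec (e k) (f k) z)"
    using eigen_sum[where f=f] by simp
  also have "\<dots> = (\<lambda>z. \<Sum>k<m. c k * tensor_vec (e k) (g k) z)"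
    using assms(2) by (simp add: mat_vec_sum mat_vec_scale)
  also have "\<dots> = mat_vec (tensor_mat A id_mat) (\<lambda>z. \<Sum>k<m. tensor_vec (e k) (g k) z)"
    using eigen_sum[where f=g] by simp
  finally show ?thesis .
qed

text \<open>A single unit vector \<open>\<chi>\<close> serves for all \<open>a\<^sub>k\<close>: \<open>\<chi>\<close> is a standard basis vector \<open>\<delta>\<^sub>b\<^sub>0\<close>, and the
  phase of \<open>t\<^sub>k\<close> is that of \<open>a\<^sub>k b\<^sub>0\<close> (or 1 if it vanishes).\<close>

lemma exists_aligned_multiples:
  fixes a :: "nat \<Rightarrow> 'a::finite \<Rightarrow> complex"
  shows "\<exists>\<chi> t. unit_vector \<chi> \<and>
           (\<forall>k. cinner (\<lambda>b. t k * \<chi> b) (\<lambda>b. t k * \<chi> b) = cinner (a k) (a k)) \<and>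
           (\<forall>k. cinner (\<lambda>b. t k * \<chi> b) (a k) = cinner (a k) (\<lambda>b. t k * \<chi> b))"
proof -
  obtain b0 :: 'a where True by simp
  define \<chi> where "\<chi> = (\<lambda>b. if b = b0 then 1 else (0::complex))"
  define r where "r k = sqrt (\<Sum>b\<in>UNIV. (cmod (a k b))\<^sup>2)" for k
  define t where "t k = of_real (r k) * cis (Arg (a k b0))" for k
  have \<chi>v: "cinner \<chi> v = v b0" for v
  proof -
    have "cinner \<chi> v = (\<Sum>b\<in>UNIV. if b = b0 then v b else 0)"
      unfolding cinner_def \<chi>_def by (intro sum.cong) auto
    then show ?thesis by simp
  qed
  have \<chi>b0: "\<chi> b0 = 1" by (simp add: \<chi>_def)
  then have \<chi>\<chi>: "cinner \<chi> \<chi> = 1" unfolding \<chi>v .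
  have cis_cnj_mult: "cnj (cis \<theta>) * cis \<theta> = 1" for \<theta>
    by (simp add: cis_cnj cis_mult)
  have "cnj (t k) * t k = cinner (a k) (a k)" for k
  proof -
    have "cnj (t k) * t k = of_real ((r k)\<^sup>2)"
      unfolding t_def using cis_cnj_mult[of "Arg (a k b0)"]
      by (simp add: power2_eq_square ac_simps)
    then show ?thesis unfolding r_def cinner_self by (simp add: sum_nonneg)
  qed
  moreover have "cnj (t k) * a k b0 = of_real (r k * cmod (a k b0))" for k
  proof -
    define \<theta> where "\<theta> = Arg (a k b0)"
    have "cnj (t k) * a k b0 = of_real (r k) * cnj (cis \<theta>) * a k b0"
      by (simp add: t_def \<theta>_def)
    also have "\<dots> = of_real (r k) * cnj (cis \<theta>) * (of_real (cmod (a k b0)) * cis \<theta>)"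
      using rcis_cmod_Arg[of "a k b0"] unfolding rcis_def \<theta>_def by simp
    also have "\<dots> = of_real (r k) * of_real (cmod (a k b0)) * (cnj (cis \<theta>) * cis \<theta>)"
      by (simp only: ac_simps)
    finally show ?thesis by (simp add: cis_cnj_mult)
  qed
  ultimately have "cinner (\<lambda>b. t k * \<chi> b) (\<lambda>b. t k * \<chi> b) = cinner (a k) (a k)"
    and real: "cinner (\<lambda>b. t k * \<chi> b) (a k) = of_real (r k * cmod (a k b0))" for k
    by (simp_all add: cinner_scale_left cinner_scale_right \<chi>b0 \<chi>v)
  moreover have "cinner (a k) (\<lambda>b. t k * \<chi> b) = of_real (r k * cmod (a k b0))" for k
    using arg_cong[OF real[of k], of cnj] by (simp add: cinner_cnj)
  ultimately show ?thesis
    using \<chi>\<chi> unfolding unit_vector_cinner by (intro exI[of _ \<chi>] exI[of _ t]) simp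
qed

lemma exists_product_state_componentwise:
  fixes e :: "nat \<Rightarrow> 'q::finite \<Rightarrow> complex" and a :: "nat \<Rightarrow> 'a::finite \<Rightarrow> complex"
  assumes on: "orthonormal m e"
  shows "\<exists>\<xi> \<chi> f V. unit_vector \<chi> \<and> unitary_mat V \<and>
           tensor_vec \<xi> \<chi> = (\<lambda>z. \<Sum>k<m. tensor_vec (e k) (f k) z) \<and>
           cinner \<xi> \<xi> = (\<Sum>k<m. cinner (a k) (a k)) \<and>
           (\<forall>k<m. mat_vec V (tensor_vec (e k) (f k)) = tensor_vec (e k) (a k))"
proof -
  obtain \<chi> t where \<chi>: "unit_vector \<chi>"
    and norm: "\<forall>k. cinner (\<lambda>b. t k * \<chi> b) (\<lambda>b. t k * \<chi> b) = cinner (a k) (a k)"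
    and real: "\<forall>k. cinner (\<lambda>b. t k * \<chi> b) (a k) = cinner (a k) (\<lambda>b. t k * \<chi> b)"
    using exists_aligned_multiples[of a] by (elim exE conjE) (rule that)
  from unitary_mapping_tensor_components[where f="\<lambda>k b. t k * \<chi> b" and g=a, OF on]
  obtain V where "unitary_mat V"
    and "\<forall>k<m. mat_vec V (tensor_vec (e k) (\<lambda>b. t k * \<chi> b)) = tensor_vec (e k) (a k)"
    using norm real by blast
  moreover define \<xi> where "\<xi> = (\<lambda>q. \<Sum>k<m. t k * e k q)"
  moreover have xi_chi: "tensor_vec \<xi> \<chi> = (\<lambda>z. \<Sum>k<m. tensor_vec (e k) (\<lambda>b. t k * \<chi> b) z)"
    unfolding \<xi>_def tensor_vec_def by (auto simp: fun_eq_iff sum_distrib_left sum_distrib_right ac_simps)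
  moreover have "cinner \<xi> \<xi> = (\<Sum>k<m. cinner (a k) (a k))"
  proof -
    have "cinner \<xi> \<xi> = cinner (tensor_vec \<xi> \<chi>) (tensor_vec \<xi> \<chi>)"
      using \<chi> by (simp add: cinner_tensor unit_vector_cinner)
    then show ?thesis unfolding xi_chi cinner_tensor_sum_orthonormal[OF on] norm[rule_format] .
  qed
  ultimately show ?thesis using \<chi>
    by (intro exI[of _ \<xi>] exI[of _ \<chi>] exI[of _ "\<lambda>k b. t k * \<chi> b"] exI[of _ V]) simp
qed

theorem theorem2:
  fixes U :: "nat \<Rightarrow> 'q::finite cmat" and K :: nat
    and \<psi> :: "'q \<times> 'a::finite \<Rightarrow> complex"
  assumes dims: "card (UNIV :: 'q set) \<le> card (UNIV :: 'a set)"
    and unit: "\<And>j. j \<in> {1..K} \<Longrightarrow> unitary_mat (U j)"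
    and comm: "\<And>j k. j \<in> {1..K} \<Longrightarrow> k \<in> {1..K} \<Longrightarrow> mat_mult (U j) (U k) = mat_mult (U k) (U j)"
    and psi: "unit_vector \<psi>"
  shows "\<exists>(\<xi> :: 'q \<Rightarrow> complex) (\<chi> :: 'a \<Rightarrow> complex) (V :: ('q \<times> 'a) cmat).
           unit_vector \<xi> \<and> unit_vector \<chi> \<and> unitary_mat V \<and>
           (\<forall>j\<in>{1..K}. mat_vec V (mat_vec (tensor_mat (U j) id_mat) (tensor_vec \<xi> \<chi>))
                        = mat_vec (tensor_mat (U j) id_mat) \<psi>)"
proof -
  from commuting_unitaries_common_eigenbasis[where I="{1..K}" and U=U, OF finite_atLeastAtMost unit comm]
  obtain m e \<mu> where basis: "orthonormal_basis m e" and eig: "common_eigenvectors {1..K} U m e \<mu>"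
    by blast
  then have on: "orthonormal m e" unfolding orthonormal_basis_def by blast
  define a where "a k b = cinner (e k) (\<lambda>q. \<psi> (q, b))" for k b
  have psi_exp: "\<psi> = (\<lambda>z. \<Sum>k<m. tensor_vec (e k) (a k) z)"
    unfolding a_def by (rule orthonormal_basis_tensor_expansion[OF basis])
  from exists_product_state_componentwise[OF on, of a]
  obtain \<xi> \<chi> f V where \<chi>: "unit_vector \<chi>" and V: "unitary_mat V"
    and xi_chi_exp: "tensor_vec \<xi> \<chi> = (\<lambda>z. \<Sum>k<m. tensor_vec (e k) (f k) z)"
    and xi_norm: "cinner \<xi> \<xi> = (\<Sum>k<m. cinner (a k) (a k))"
    and V_comp: "\<forall>k<m. mat_vec V (tensor_vec (e k) (f k)) = tensor_vec (e k) (a k)"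
    by (elim exE conjE) (rule that)
  have "cinner \<psi> \<psi> = (\<Sum>k<m. cinner (a k) (a k))"
    by (subst (1 2) psi_exp) (rule cinner_tensor_sum_orthonormal[OF on])
  then have "unit_vector \<xi>" using psi xi_norm by (simp add: unit_vector_cinner)
  moreover have "mat_vec V (mat_vec (tensor_mat (U j) id_mat) (tensor_vec \<xi> \<chi>))
                   = mat_vec (tensor_mat (U j) id_mat) \<psi>" if "j \<in> {1..K}" for j
  proof -
    have "\<And>k. k < m \<Longrightarrow> mat_vec (U j) (e k) = (\<lambda>q. \<mu> j k * e k q)"
      using eig that unfolding common_eigenvectors_def by blast
    from mat_vec_tensor_id_intertwines_components[where A="U j" and c="\<mu> j" and e=e and m=m,
        OF this V_comp]
    show ?thesis by (simp only: xi_chi_exp psi_exp[symmetric])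
  qed
  ultimately show ?thesis using \<chi> V by (intro exI[of _ \<xi>] exI[of _ \<chi>] exI[of _ V]) simp
qed

end
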